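(* In partially synchronous systems, there is no deterministic protocol that solves Byzantine consensus (Validity, Agreement, Termination) in every system whose knowledge connectivity graph belongs to $\mathcal{G}_{di}$ when each process $i$ is given only its participant detector $PD_i$ as input and no process knows the fault threshold $f$. (This holds even with digital signatures, and even when faults are only crashes.)
   Context: System: finite set $\Pi$ of processes, partially synchronous (an unknown GST after which messages between correct processes arrive within an unknown $\delta$), a set $F$ of faulty processes with $|F|\le f$ for some fault threshold $f$, reliable authenticated channels. Each process $i$ has a participant detector $PD_i\subseteq\Pi$ (the processes it initially knows) and may only message processes it currently knows. The knowledge connectivity graph is $G_{di}=(\Pi,\{(i,j):j\in PD_i\})$. A digraph belongs to $k$-OSR PD if its underlying undirected graph is connected, its condensation has exactly one sink component, that sink is $k$-strongly connected, and every vertex outside it has $k$ node-disjoint paths to every vertex in it. $G_{safe}=G_{di}[\Pi\setminus F]$. $\mathcal{G}_{di}$: graphs whose $G_{safe}$ is in $(f+1)$-OSR PD with safe sink of size $\ge 2f+1$. Consensus: each correct process proposes a valid value (w.r.t. a predicate $\mathtt{valid}$); Validity: a correct process decides a valid value proposed by some process; Agreement: all correct processes decide the same value; Termination: every correct process eventually decides. *)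

theory Defs
  imports Main
begin

text \<open>A digraph is given by a vertex set V and an edge relation E; only edges with
both endpoints in V are relevant (so (C, E) is the subgraph induced by C).\<close>

definition is_path :: "'a set \<Rightarrow> ('a \<times> 'a) set \<Rightarrow> 'a list \<Rightarrow> 'a \<Rightarrow> 'a \<Rightarrow> bool" where
  "is_path V E xs u v \<longleftrightarrow> xs \<noteq> [] \<and> hd xs = u \<and> last xs = v \<and> distinct xs \<and> set xs \<subseteq> V \<and>
     (\<forall>k < length xs - 1. (xs ! k, xs ! Suc k) \<in> E)"

definition internal :: "'a list \<Rightarrow> 'a set" where
  "internal xs = set (butlast (tl xs))"

definition disjoint_paths :: "'a set \<Rightarrow> ('a \<times> 'a) set \<Rightarrow> nat \<Rightarrow> 'a \<Rightarrow> 'a \<Rightarrow> bool" where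
  "disjoint_paths V E k u v \<longleftrightarrow> (\<exists>P. finite P \<and> card P = k \<and> (\<forall>p\<in>P. is_path V E p u v) \<and>
      (\<forall>p\<in>P. \<forall>q\<in>P. p \<noteq> q \<longrightarrow> internal p \<inter> internal q = {}))"

definition k_strongly_connected :: "'a set \<Rightarrow> ('a \<times> 'a) set \<Rightarrow> nat \<Rightarrow> bool" where
  "k_strongly_connected V E k \<longleftrightarrow> (\<forall>u\<in>V. \<forall>v\<in>V. u \<noteq> v \<longrightarrow> disjoint_paths V E k u v)"

definition reach :: "'a set \<Rightarrow> ('a \<times> 'a) set \<Rightarrow> 'a \<Rightarrow> 'a \<Rightarrow> bool" where
  "reach V E u v \<longleftrightarrow> (u, v) \<in> (E \<inter> V \<times> V)\<^sup>*"

definition underlying_connected :: "'a set \<Rightarrow> ('a \<times> 'a) set \<Rightarrow> bool" where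
  "underlying_connected V E \<longleftrightarrow> (\<forall>u\<in>V. \<forall>v\<in>V. (u, v) \<in> ((E \<union> E\<inverse>) \<inter> V \<times> V)\<^sup>*)"

text \<open>C is a strongly connected component of (V,E) which is a sink of the condensation\<close>
definition sink_component :: "'a set \<Rightarrow> ('a \<times> 'a) set \<Rightarrow> 'a set \<Rightarrow> bool" where
  "sink_component V E C \<longleftrightarrow> C \<noteq> {} \<and> C \<subseteq> V \<and>
     (\<forall>x\<in>C. \<forall>y\<in>V. (reach V E x y \<and> reach V E y x) \<longleftrightarrow> y \<in> C) \<and>
     (\<forall>x\<in>C. \<forall>y\<in>V. (x, y) \<in> E \<longrightarrow> y \<in> C)"

definition k_OSR :: "nat \<Rightarrow> 'a set \<Rightarrow> ('a \<times> 'a) set \<Rightarrow> bool" where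
  "k_OSR k V E \<longleftrightarrow> underlying_connected V E \<and> (\<exists>!C. sink_component V E C) \<and>
     (\<forall>C. sink_component V E C \<longrightarrow>
        k_strongly_connected C E k \<and> (\<forall>u\<in>V - C. \<forall>v\<in>C. disjoint_paths V E k u v))"

definition kc_edges :: "nat set \<Rightarrow> (nat \<Rightarrow> nat set) \<Rightarrow> (nat \<times> nat) set" where
  "kc_edges Pi PD = {(i, j). i \<in> Pi \<and> j \<in> PD i}"

definition in_G_di :: "nat set \<Rightarrow> (nat \<Rightarrow> nat set) \<Rightarrow> nat \<Rightarrow> nat set \<Rightarrow> bool" where
  "in_G_di Pi PD f F \<longleftrightarrow> k_OSR (f + 1) (Pi - F) (kc_edges Pi PD) \<and>
     (\<forall>C. sink_component (Pi - F) (kc_edges Pi PD) C \<longrightarrow> card C \<ge> 2 * f + 1)"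

definition admissible_system :: "nat set \<Rightarrow> (nat \<Rightarrow> nat set) \<Rightarrow> nat \<Rightarrow> nat set \<Rightarrow> bool" where
  "admissible_system Pi PD f F \<longleftrightarrow> finite Pi \<and> (\<forall>i\<in>Pi. PD i \<subseteq> Pi) \<and> F \<subseteq> Pi \<and> card F \<le> f \<and>
     in_G_di Pi PD f F"

text \<open>A deterministic protocol: the initial state of a process depends only on its own id,
its participant detector and its proposal (neither Pi nor f is an input). In each step a
process receives a set of (sender, payload, attached ids) and produces a new state and a
set of (destination, payload, attached ids). Attached ids model identities conveyed in
messages; they must be known to the sender.\<close>
record ('s, 'v, 'm) protocol =
  p_init :: "nat \<Rightarrow> nat set \<Rightarrow> 'v \<Rightarrow> 's"
  p_step :: "'s \<Rightarrow> (nat \<times> 'm \<times> nat set) set \<Rightarrow> 's \<times> (nat \<times> 'm \<times> nat set) set"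
  p_decision :: "'s \<Rightarrow> 'v option"

text \<open>Configuration at global time t: states, known sets, and the messages sent by each
process at each earlier time. Processes in F crash at time c i (take no step at any
time >= c i); D s t0 r x is the delivery time of message x sent by s to r at time t0.
Processes may only send to processes they currently know (other sends are dropped).\<close>
primrec cfg :: "('s, 'v, 'm) protocol \<Rightarrow> nat set \<Rightarrow> (nat \<Rightarrow> nat set) \<Rightarrow> nat set \<Rightarrow> (nat \<Rightarrow> 'v)
    \<Rightarrow> (nat \<Rightarrow> nat) \<Rightarrow> (nat \<Rightarrow> nat \<Rightarrow> nat \<Rightarrow> 'm \<times> nat set \<Rightarrow> nat) \<Rightarrow> nat
    \<Rightarrow> (nat \<Rightarrow> 's) \<times> (nat \<Rightarrow> nat set) \<times> (nat \<Rightarrow> nat \<Rightarrow> (nat \<times> 'm \<times> nat set) set)" where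
  "cfg P Pi PD F prop c D 0 =
     (\<lambda>i. p_init P i (PD i) (prop i), \<lambda>i. insert i (PD i), \<lambda>i t0. {})"
| "cfg P Pi PD F prop c D (Suc t) =
     (let (st, kn, sn) = cfg P Pi PD F prop c D t;
          alive = (\<lambda>i. i \<in> Pi \<and> (i \<in> F \<longrightarrow> t < c i));
          rcv = (\<lambda>i. {(s, m, ids). \<exists>t0<t. (i, m, ids) \<in> sn s t0 \<and> D s t0 i (m, ids) = t});
          kn' = (\<lambda>i. if alive i then kn i \<union> {s. \<exists>m ids. (s, m, ids) \<in> rcv i}
                                   \<union> \<Union>{ids. \<exists>s m. (s, m, ids) \<in> rcv i}
                     else kn i);
          out = (\<lambda>i. if alive i then {(j, m, ids) \<in> snd (p_step P (st i) (rcv i)). j \<in> kn' i \<and> ids \<subseteq> kn' i}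
                     else {})
      in (\<lambda>i. if alive i then fst (p_step P (st i) (rcv i)) else st i,
          kn',
          \<lambda>i t0. if t0 = t then out i else sn i t0))"

definition state_at :: "('s, 'v, 'm) protocol \<Rightarrow> nat set \<Rightarrow> (nat \<Rightarrow> nat set) \<Rightarrow> nat set \<Rightarrow> (nat \<Rightarrow> 'v)
    \<Rightarrow> (nat \<Rightarrow> nat) \<Rightarrow> (nat \<Rightarrow> nat \<Rightarrow> nat \<Rightarrow> 'm \<times> nat set \<Rightarrow> nat) \<Rightarrow> nat \<Rightarrow> nat \<Rightarrow> 's" where
  "state_at P Pi PD F prop c D t i = fst (cfg P Pi PD F prop c D t) i"

definition decides :: "('s, 'v, 'm) protocol \<Rightarrow> nat set \<Rightarrow> (nat \<Rightarrow> nat set) \<Rightarrow> nat set \<Rightarrow> (nat \<Rightarrow> 'v)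
    \<Rightarrow> (nat \<Rightarrow> nat) \<Rightarrow> (nat \<Rightarrow> nat \<Rightarrow> nat \<Rightarrow> 'm \<times> nat set \<Rightarrow> nat) \<Rightarrow> nat \<Rightarrow> 'v \<Rightarrow> bool" where
  "decides P Pi PD F prop c D i v \<longleftrightarrow>
     (\<exists>t. p_decision P (state_at P Pi PD F prop c D t i) = Some v \<and>
          (\<forall>t'<t. p_decision P (state_at P Pi PD F prop c D t' i) = None))"

definition partially_synchronous :: "nat set \<Rightarrow> nat set \<Rightarrow> (nat \<Rightarrow> nat \<Rightarrow> nat \<Rightarrow> 'm \<times> nat set \<Rightarrow> nat) \<Rightarrow> bool" where
  "partially_synchronous Pi F D \<longleftrightarrow> (\<forall>s t0 r x. t0 < D s t0 r x) \<and>
     (\<exists>GST \<delta>. \<forall>s\<in>Pi - F. \<forall>r\<in>Pi - F. \<forall>t0 x. D s t0 r x \<le> max t0 GST + \<delta>)"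

definition solves_consensus :: "('v \<Rightarrow> bool) \<Rightarrow> ('s, 'v, 'm) protocol \<Rightarrow> nat set \<Rightarrow> (nat \<Rightarrow> nat set) \<Rightarrow> nat set \<Rightarrow> bool" where
  "solves_consensus valid P Pi PD F \<longleftrightarrow>
     (\<forall>prop c D. (\<forall>i\<in>Pi - F. valid (prop i)) \<and> partially_synchronous Pi F D \<longrightarrow>
        (\<forall>i\<in>Pi - F. \<forall>v. decides P Pi PD F prop c D i v \<longrightarrow> valid v \<and> (\<exists>j\<in>Pi. prop j = v)) \<and>
        (\<forall>i\<in>Pi - F. \<forall>j\<in>Pi - F. \<forall>v w. decides P Pi PD F prop c D i v \<and> decides P Pi PD F prop c D j w \<longrightarrow> v = w) \<and>
        (\<forall>i\<in>Pi - F. \<exists>v. decides P Pi PD F prop c D i v))"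

end

theory Submission
  imports Defs
begin

text \<open>Take the participant detectors in which process 0 knows nobody and each of 1, 2, 3 knows
the other three. Viewed alone, \<open>{0}\<close> is an admissible system with \<open>f = 0\<close>, so 0 must
decide its own proposal \<open>a\<close> by some time \<open>T0\<close>. With \<open>f = 1\<close> and 0 crashed from the
start, the triangle \<open>{1, 2, 3}\<close> is admissible too, so 1 must decide the common proposal \<open>b\<close>
by some time \<open>T1\<close>. With \<open>f = 0\<close>, no faults, and all messages between 0 and the triangle
delayed beyond \<open>T0 + T1\<close>, the whole system is still admissible (its sink is \<open>{0}\<close>), yet
neither side can distinguish it from the run it sees alone before deciding, so 0 decides
\<open>a\<close> and 1 decides \<open>b\<close>, violating Agreement. Nobody knowing \<open>f\<close> is what lets a
single deterministic protocol be run in all three systems.\<close>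

abbreviation active :: "nat set \<Rightarrow> nat set \<Rightarrow> (nat \<Rightarrow> nat) \<Rightarrow> nat \<Rightarrow> nat \<Rightarrow> bool" where
  "active Pi F c t i \<equiv> i \<in> Pi \<and> (i \<in> F \<longrightarrow> t < c i)"

definition local_view :: "('s, 'v, 'm) protocol \<Rightarrow> nat set \<Rightarrow> (nat \<Rightarrow> nat set) \<Rightarrow> nat set \<Rightarrow> (nat \<Rightarrow> 'v)
    \<Rightarrow> (nat \<Rightarrow> nat) \<Rightarrow> (nat \<Rightarrow> nat \<Rightarrow> nat \<Rightarrow> 'm \<times> nat set \<Rightarrow> nat) \<Rightarrow> nat \<Rightarrow> nat
    \<Rightarrow> 's \<times> nat set \<times> (nat \<Rightarrow> (nat \<times> 'm \<times> nat set) set)" where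
  "local_view P Pi PD F prop c D t i =
     (fst (cfg P Pi PD F prop c D t) i, fst (snd (cfg P Pi PD F prop c D t)) i,
      snd (snd (cfg P Pi PD F prop c D t)) i)"

definition isolated_until :: "nat set \<Rightarrow> nat set \<Rightarrow> (nat \<Rightarrow> nat)
    \<Rightarrow> (nat \<Rightarrow> nat \<Rightarrow> nat \<Rightarrow> 'm \<times> nat set \<Rightarrow> nat) \<Rightarrow> nat set \<Rightarrow> nat \<Rightarrow> bool" where
  "isolated_until Pi F c D G T \<longleftrightarrow>
     (\<forall>s. s \<notin> G \<longrightarrow> (\<forall>r\<in>G. \<forall>t0 x. T \<le> D s t0 r x) \<or> (\<forall>t. \<not> active Pi F c t s))"

lemma cfg_sent_empty_if_never_active:
  assumes "\<forall>t. \<not> active Pi F c t s"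
  shows "snd (snd (cfg P Pi PD F prop c D t)) s t0 = {}"
proof (induction t arbitrary: t0)
  case 0 show ?case by simp
next
  case (Suc t)
  obtain st kn sn where "cfg P Pi PD F prop c D t = (st, kn, sn)"
    by (cases "cfg P Pi PD F prop c D t") auto
  with Suc.IH assms show ?case by (auto simp: Let_def)
qed

lemma cfg_no_receipt_from_outside_while_isolated:
  assumes "isolated_until Pi F c D G T" "s \<notin> G" "i \<in> G" "t < T"
  shows "\<not> (\<exists>t0<t. (i, m, ids) \<in> snd (snd (cfg P Pi PD F prop c D t)) s t0 \<and> D s t0 i (m, ids) = t)"
  using assms cfg_sent_empty_if_never_active[where s = s]
  unfolding isolated_until_def by (metis empty_iff leD)

lemma local_view_eq_while_isolated:
  assumes G: "G \<subseteq> Pi - F" "G \<subseteq> Pi' - F'"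
    and same_input: "\<forall>i\<in>G. PD i = PD' i \<and> prop i = prop' i"
    and same_delay: "\<forall>s\<in>G. \<forall>r\<in>G. \<forall>t0 x. D s t0 r x = D' s t0 r x"
    and iso: "isolated_until Pi F c D G T" and iso': "isolated_until Pi' F' c' D' G T"
    and "t \<le> T" "i \<in> G"
  shows "local_view P Pi PD F prop c D t i = local_view P Pi' PD' F' prop' c' D' t i"
proof -
  have "\<forall>i\<in>G. local_view P Pi PD F prop c D t i = local_view P Pi' PD' F' prop' c' D' t i"
    using \<open>t \<le> T\<close>
  proof (induction t)
    case 0 then show ?case using same_input by (simp add: local_view_def)
  next
    case (Suc t)
    obtain st kn sn where e: "cfg P Pi PD F prop c D t = (st, kn, sn)"
      by (cases "cfg P Pi PD F prop c D t") auto
    obtain st' kn' sn' where e': "cfg P Pi' PD' F' prop' c' D' t = (st', kn', sn')"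
      by (cases "cfg P Pi' PD' F' prop' c' D' t") auto
    have IH: "\<forall>i\<in>G. st i = st' i \<and> kn i = kn' i \<and> sn i = sn' i"
      using Suc by (simp add: local_view_def e e')
    have rcv: "(\<exists>t0<t. (i, m, ids) \<in> sn s t0 \<and> D s t0 i (m, ids) = t) \<longleftrightarrow>
          (\<exists>t0<t. (i, m, ids) \<in> sn' s t0 \<and> D' s t0 i (m, ids) = t)" if "i \<in> G" for i s m ids
    proof (cases "s \<in> G")
      case True then show ?thesis using IH same_delay that by auto
    next
      case False
      then show ?thesis
        using cfg_no_receipt_from_outside_while_isolated[OF iso False that]
          cfg_no_receipt_from_outside_while_isolated[OF iso' False that] Suc.prems
        by (metis Suc_le_lessD e e' snd_conv)
    qed
    show ?case
    proof
      fix i assume i: "i \<in> G"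
      then have "active Pi F c t i" "active Pi' F' c' t i" using G by auto
      moreover have "st i = st' i" "kn i = kn' i" "sn i = sn' i" using IH i by auto
      ultimately show "local_view P Pi PD F prop c D (Suc t) i =
          local_view P Pi' PD' F' prop' c' D' (Suc t) i"
        using rcv[OF i] by (simp add: local_view_def e e' Let_def fun_eq_iff)
    qed
  qed
  with \<open>i \<in> G\<close> show ?thesis by blast
qed

lemma state_at_eq_if_local_view_eq:
  "local_view P Pi PD F prop c D t i = local_view P Pi' PD' F' prop' c' D' t i \<Longrightarrow>
   state_at P Pi PD F prop c D t i = state_at P Pi' PD' F' prop' c' D' t i"
  by (simp add: local_view_def state_at_def split: prod.splits)

lemma disjoint_paths_edge:
  assumes "u \<noteq> v" "u \<in> V" "v \<in> V" "(u, v) \<in> E"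
  shows "disjoint_paths V E 1 u v"
  unfolding disjoint_paths_def
  by (rule exI[of _ "{[u, v]}"]) (use assms in \<open>auto simp: is_path_def\<close>)

lemma disjoint_paths_triangle:
  assumes "distinct [u, v, w]" "{u, v, w} \<subseteq> V" "(u, v) \<in> E" "(u, w) \<in> E" "(w, v) \<in> E"
  shows "disjoint_paths V E 2 u v"
  unfolding disjoint_paths_def
  by (rule exI[of _ "{[u, v], [u, w, v]}"])
    (use assms in \<open>auto simp: is_path_def internal_def less_Suc_eq nth_Cons'\<close>)

lemma sink_component_iff_strongly_connected:
  assumes "\<forall>x\<in>V. \<forall>y\<in>V. reach V E x y" "V \<noteq> {}"
  shows "sink_component V E C \<longleftrightarrow> C = V"
  using assms unfolding sink_component_def by blast

lemma sink_component_iff_absorbing_vertex: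
  assumes "z \<in> V" and into: "\<forall>x\<in>V. x \<noteq> z \<longrightarrow> (x, z) \<in> E" and no_out: "\<forall>y. (z, y) \<notin> E"
  shows "sink_component V E C \<longleftrightarrow> C = {z}"
proof -
  have reach_from_z: "reach V E z y \<longleftrightarrow> y = z" for y
    unfolding reach_def by (auto elim: converse_rtranclE simp: no_out)
  show ?thesis
  proof
    assume C: "sink_component V E C"
    then obtain x where "x \<in> C" unfolding sink_component_def by blast
    with C into \<open>z \<in> V\<close> have "z \<in> C" unfolding sink_component_def by (metis subsetD)
    with C \<open>z \<in> V\<close> reach_from_z show "C = {z}" unfolding sink_component_def by blast
  next
    assume "C = {z}"
    with assms reach_from_z show "sink_component V E C"
      unfolding sink_component_def by (auto simp: reach_def)
  qed
qed

lemma k_OSR_1_absorbing_vertex: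
  assumes "z \<in> V" and into: "\<forall>x\<in>V. x \<noteq> z \<longrightarrow> (x, z) \<in> E" and no_out: "\<forall>y. (z, y) \<notin> E"
  shows "k_OSR 1 V E"
proof -
  note sink = sink_component_iff_absorbing_vertex[OF assms]
  have "(u, z) \<in> ((E \<union> E\<inverse>) \<inter> V \<times> V)\<^sup>*" "(z, u) \<in> ((E \<union> E\<inverse>) \<inter> V \<times> V)\<^sup>*"
    if "u \<in> V" for u
    using that into \<open>z \<in> V\<close> by (cases "u = z"; auto intro!: r_into_rtrancl)+
  then have "underlying_connected V E"
    unfolding underlying_connected_def by (meson rtrancl_trans)
  moreover have "disjoint_paths V E 1 u z" if "u \<in> V - {z}" for u
    using that into \<open>z \<in> V\<close> by (intro disjoint_paths_edge) auto
  ultimately show ?thesis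
    unfolding k_OSR_def sink k_strongly_connected_def by auto
qed

lemma k_OSR_2_complete:
  assumes complete: "\<forall>u\<in>V. \<forall>v\<in>V. u \<noteq> v \<longrightarrow> (u, v) \<in> E" and "3 \<le> card V"
  shows "k_OSR 2 V E" and "sink_component V E C \<longleftrightarrow> C = V"
proof -
  have reach: "\<forall>x\<in>V. \<forall>y\<in>V. reach V E x y"
    using complete unfolding reach_def by (metis IntI mem_Sigma_iff r_into_rtrancl rtrancl.rtrancl_refl)
  have "V \<noteq> {}" using \<open>3 \<le> card V\<close> by auto
  note sink = sink_component_iff_strongly_connected[OF reach this]
  then show "sink_component V E C \<longleftrightarrow> C = V" .
  have "\<exists>w\<in>V. w \<noteq> u \<and> w \<noteq> v" for u v
  proof (rule ccontr)
    assume "\<not> ?thesis"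
    then have "card V \<le> card {u, v}" by (intro card_mono) auto
    also have "\<dots> \<le> 2" by (simp add: card_insert_if)
    finally show False using \<open>3 \<le> card V\<close> by simp
  qed
  then have "k_strongly_connected V E 2"
    unfolding k_strongly_connected_def
  proof (intro ballI impI)
    fix u v assume "u \<in> V" "v \<in> V" "u \<noteq> v"
    moreover obtain w where "w \<in> V" "w \<noteq> u" "w \<noteq> v"
      using \<open>\<And>u v. \<exists>w\<in>V. w \<noteq> u \<and> w \<noteq> v\<close> by blast
    ultimately show "disjoint_paths V E 2 u v"
      using complete by (intro disjoint_paths_triangle[of u v w]) auto
  qed
  moreover have "underlying_connected V E"
    using reach unfolding underlying_connected_def reach_def
    by (meson Int_mono Un_upper1 order_refl rtrancl_mono subsetD)
  ultimately show "k_OSR 2 V E"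
    unfolding k_OSR_def sink by auto
qed

definition pd_example :: "nat \<Rightarrow> nat set" where
  "pd_example i = (if i = 0 then {} else {0, 1, 2, 3} - {i})"

lemma no_edge_from_0: "(0, y) \<notin> kc_edges Pi pd_example"
  by (simp add: kc_edges_def pd_example_def)

lemma admissible_solo: "admissible_system {0} pd_example 0 {}"
proof -
  have "k_OSR 1 {0} (kc_edges {0} pd_example)"
    by (rule k_OSR_1_absorbing_vertex[of 0]) (auto simp: no_edge_from_0)
  moreover have "sink_component {0} (kc_edges {0} pd_example) C \<longleftrightarrow> C = {0}" for C
    by (rule sink_component_iff_absorbing_vertex) (auto simp: no_edge_from_0)
  ultimately show ?thesis
    by (simp add: admissible_system_def in_G_di_def pd_example_def)
qed

lemma admissible_star: "admissible_system {0, 1, 2, 3} pd_example 0 {}"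
proof -
  have into: "\<forall>x\<in>{0, 1, 2, 3}. x \<noteq> 0 \<longrightarrow> (x, 0) \<in> kc_edges {0, 1, 2, 3} pd_example"
    by (simp add: kc_edges_def pd_example_def)
  have "k_OSR 1 {0, 1, 2, 3} (kc_edges {0, 1, 2, 3} pd_example)"
    by (rule k_OSR_1_absorbing_vertex[of 0]) (use into no_edge_from_0 in auto)
  moreover have "sink_component {0, 1, 2, 3} (kc_edges {0, 1, 2, 3} pd_example) C \<longleftrightarrow> C = {0}" for C
    by (rule sink_component_iff_absorbing_vertex[of 0]) (use into no_edge_from_0 in auto)
  ultimately show ?thesis
    by (auto simp: admissible_system_def in_G_di_def pd_example_def)
qed

lemma admissible_crashed_hub: "admissible_system {0, 1, 2, 3} pd_example 1 {0}"
proof -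
  have V: "{0, 1, 2, 3} - {0} = {1, 2, 3 :: nat}" by auto
  have complete: "\<forall>u\<in>{1, 2, 3}. \<forall>v\<in>{1, 2, 3}. u \<noteq> v \<longrightarrow> (u, v) \<in> kc_edges {0, 1, 2, 3} pd_example"
    by (auto simp: kc_edges_def pd_example_def)
  have "card {1, 2, 3 :: nat} = 3" by simp
  with k_OSR_2_complete[OF complete] show ?thesis
    by (auto simp: admissible_system_def in_G_di_def pd_example_def V numeral_2_eq_2)
qed

lemma solves_consensus_unanimous_decides:
  assumes "solves_consensus valid P Pi PD F" "\<forall>j\<in>Pi. prop j = w" "valid w"
    "partially_synchronous Pi F D" "i \<in> Pi - F"
  shows "decides P Pi PD F prop c D i w"
proof -
  from assms obtain v where "decides P Pi PD F prop c D i v" "\<exists>j\<in>Pi. prop j = v"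
    unfolding solves_consensus_def by (metis DiffD1)
  with assms(2) show ?thesis by auto
qed

lemma solves_consensus_agreement:
  assumes "solves_consensus valid P Pi PD F" "\<forall>j\<in>Pi - F. valid (prop j)"
    "partially_synchronous Pi F D" "i \<in> Pi - F" "j \<in> Pi - F"
    "decides P Pi PD F prop c D i v" "decides P Pi PD F prop c D j w"
  shows "v = w"
  using assms unfolding solves_consensus_def by blast

lemma decides_determined_by_prefix:
  assumes "decides P Pi PD F prop c D i v"
  obtains T where "\<And>Pi' PD' F' prop' c' D'.
      \<forall>t\<le>T. state_at P Pi' PD' F' prop' c' D' t i = state_at P Pi PD F prop c D t i \<Longrightarrow>
      decides P Pi' PD' F' prop' c' D' i v"
proof -
  from assms obtain T where "p_decision P (state_at P Pi PD F prop c D T i) = Some v"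
    "\<forall>t<T. p_decision P (state_at P Pi PD F prop c D t i) = None"
    unfolding decides_def by blast
  then show thesis
    by (intro that[of T]) (auto simp: decides_def intro!: exI[of _ T])
qed

definition sync_delay :: "nat \<Rightarrow> nat \<Rightarrow> nat \<Rightarrow> 'm \<times> nat set \<Rightarrow> nat" where
  "sync_delay s t0 r x = Suc t0"

definition split_delay :: "nat \<Rightarrow> nat \<Rightarrow> nat \<Rightarrow> nat \<Rightarrow> 'm \<times> nat set \<Rightarrow> nat" where
  "split_delay L s t0 r x = (if (s = 0) = (r = 0) then Suc t0 else t0 + L)"

lemma partially_synchronous_sync_delay: "partially_synchronous Pi F sync_delay"
  unfolding partially_synchronous_def sync_delay_def by (auto intro!: exI[of _ 1])

lemma partially_synchronous_split_delay:
  "0 < L \<Longrightarrow> partially_synchronous Pi F (split_delay L)"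
  unfolding partially_synchronous_def split_delay_def by (auto intro!: exI[of _ "Suc L"])

lemma split_run_indistinguishable_from_solo_run:
  assumes "t \<le> L" "prop 0 = prop' 0"
  shows "state_at P {0, 1, 2, 3} pd_example {} prop c (split_delay L) t 0 =
         state_at P {0} pd_example {} prop' c' sync_delay t 0"
proof (rule state_at_eq_if_local_view_eq, rule local_view_eq_while_isolated[where G = "{0}"])
  show "isolated_until {0, 1, 2, 3} {} c (split_delay L) {0} L"
    by (simp add: isolated_until_def split_delay_def)
  show "isolated_until {0} {} c' sync_delay {0} L"
    by (simp add: isolated_until_def)
qed (use assms in \<open>auto simp: split_delay_def sync_delay_def\<close>)

lemma split_run_indistinguishable_from_crashed_hub_run:
  assumes "t \<le> L" "\<forall>j\<in>{1, 2, 3}. prop j = prop' j" "i \<in> {1, 2, 3}"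
  shows "state_at P {0, 1, 2, 3} pd_example {} prop c (split_delay L) t i =
         state_at P {0, 1, 2, 3} pd_example {0} prop' (\<lambda>_. 0) sync_delay t i"
proof (rule state_at_eq_if_local_view_eq, rule local_view_eq_while_isolated[where G = "{1, 2, 3}"])
  show "isolated_until {0, 1, 2, 3} {} c (split_delay L) {1, 2, 3} L"
    by (auto simp: isolated_until_def split_delay_def)
  show "isolated_until {0, 1, 2, 3} {0} (\<lambda>_. 0) sync_delay {1, 2, 3} L"
    by (auto simp: isolated_until_def)
qed (use assms in \<open>auto simp: split_delay_def sync_delay_def\<close>)

theorem theorem7:
  fixes valid :: "'v \<Rightarrow> bool"
  assumes "\<exists>a b. a \<noteq> b \<and> valid a \<and> valid b"
  shows "\<not> (\<exists>P :: ('s, 'v, 'm) protocol.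
             \<forall>Pi PD f F. admissible_system Pi PD f F \<longrightarrow> solves_consensus valid P Pi PD F)"
proof
  assume "\<exists>P :: ('s, 'v, 'm) protocol.
             \<forall>Pi PD f F. admissible_system Pi PD f F \<longrightarrow> solves_consensus valid P Pi PD F"
  then obtain P :: "('s, 'v, 'm) protocol"
    where solves: "\<And>Pi PD f F. admissible_system Pi PD f F \<Longrightarrow> solves_consensus valid P Pi PD F"
    by blast
  obtain a b where ab: "a \<noteq> b" "valid a" "valid b" using assms by blast
  define proposal where "proposal = (\<lambda>i :: nat. if i = 0 then a else b)"
  have "decides P {0} pd_example {} proposal (\<lambda>_. 0) sync_delay 0 a"
    by (rule solves_consensus_unanimous_decides[OF solves[OF admissible_solo]])
      (simp_all add: ab proposal_def partially_synchronous_sync_delay)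
  then obtain T0 where T0: "\<And>Pi' PD' F' prop' c' D'.
      \<forall>t\<le>T0. state_at P Pi' PD' F' prop' c' D' t 0 = state_at P {0} pd_example {} proposal (\<lambda>_. 0) sync_delay t 0 \<Longrightarrow>
      decides P Pi' PD' F' prop' c' D' 0 a"
    by (rule decides_determined_by_prefix) blast
  have "decides P {0, 1, 2, 3} pd_example {0} (\<lambda>_. b) (\<lambda>_. 0) sync_delay 1 b"
    by (rule solves_consensus_unanimous_decides[OF solves[OF admissible_crashed_hub]])
      (simp_all add: ab partially_synchronous_sync_delay)
  then obtain T1 where T1: "\<And>Pi' PD' F' prop' c' D'.
      \<forall>t\<le>T1. state_at P Pi' PD' F' prop' c' D' t 1 = state_at P {0, 1, 2, 3} pd_example {0} (\<lambda>_. b) (\<lambda>_. 0) sync_delay t 1 \<Longrightarrow>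
      decides P Pi' PD' F' prop' c' D' 1 b"
    by (rule decides_determined_by_prefix) blast
  define L where "L = Suc (T0 + T1)"
  have decides_a: "decides P {0, 1, 2, 3} pd_example {} proposal (\<lambda>_. 0) (split_delay L) 0 a"
    by (intro T0 allI impI split_run_indistinguishable_from_solo_run) (simp_all add: L_def)
  have decides_b: "decides P {0, 1, 2, 3} pd_example {} proposal (\<lambda>_. 0) (split_delay L) 1 b"
    by (intro T1 allI impI split_run_indistinguishable_from_crashed_hub_run)
      (simp_all add: L_def proposal_def)
  have "a = b"
    by (rule solves_consensus_agreement[OF solves[OF admissible_star] _ _ _ _ decides_a decides_b])
      (auto simp: ab proposal_def L_def partially_synchronous_split_delay)
  with \<open>a \<noteq> b\<close> show False ..
qed

end
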